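(* Let $u=u_1\cdots u_n$ be a word over a finite alphabet and let $s$ be a nonempty factor of $u$. Let $\mathit{first}(s)$ and $\mathit{last}(s)$ be the smallest and the largest starting positions of occurrences of $s$ in $u$. Then $s$ is a border seed of $u$ if and only if $$|s|\ \ge\ \max\Big(\mathrm{per}\big(u[1 .. \mathit{first}(s)+|s|-1]\big),\ \mathrm{per}\big(u[\mathit{last}(s) .. n]\big)\Big).$$
   Context: Positions in a word $u$ are numbered $1,\dots,|u|$; $u[i..j]=u_i\cdots u_j$ is a factor. For a nonempty word $x$, $\mathrm{per}(x)$ is the smallest positive integer $p$ such that $x_i=x_{i+p}$ for all $1\le i\le |x|-p$. A word $s$ covers a word $w$ if every position of $w$ lies inside some occurrence of $s$ as a factor of $w$. A word $s$ is a seed of $u$ if $s$ is a factor of $u$ and $u$ is a factor of some word $w$ covered by $s$. For a factor $s$ of $u$, decompose $u=w_1w_2w_3$ where $w_2=u[\mathit{first}(s) .. \mathit{last}(s)+|s|-1]$ (the longest factor of $u$ having $s$ as a border); $s$ is called a border seed of $u$ if $s$ is a seed of the word $w_1\, s\, w_3$. *)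

theory Defs
  imports "HOL-Library.Sublist"
begin

text \<open>Words are lists; positions are numbered 1..length u.\<close>

definition fac :: "'a list \<Rightarrow> nat \<Rightarrow> nat \<Rightarrow> 'a list" where
  "fac u i j = take (Suc j - i) (drop (i - 1) u)"   \<comment> \<open>u[i..j] = u_i ... u_j\<close>

definition occ_at :: "'a list \<Rightarrow> 'a list \<Rightarrow> nat \<Rightarrow> bool" where
  "occ_at u s i \<longleftrightarrow> 1 \<le> i \<and> i + length s - 1 \<le> length u \<and> fac u i (i + length s - 1) = s"

definition per :: "'a list \<Rightarrow> nat" where
  "per x = (LEAST p. 0 < p \<and> (\<forall>i. 1 \<le> i \<and> i + p \<le> length x \<longrightarrow> x ! (i - 1) = x ! (i + p - 1)))"

definition covers :: "'a list \<Rightarrow> 'a list \<Rightarrow> bool" where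
  "covers s w \<longleftrightarrow> (\<forall>k. 1 \<le> k \<and> k \<le> length w \<longrightarrow>
      (\<exists>i. occ_at w s i \<and> i \<le> k \<and> k \<le> i + length s - 1))"

definition seed :: "'a list \<Rightarrow> 'a list \<Rightarrow> bool" where
  "seed s u \<longleftrightarrow> sublist s u \<and> (\<exists>w. covers s w \<and> sublist u w)"

definition first_occ :: "'a list \<Rightarrow> 'a list \<Rightarrow> nat" where
  "first_occ s u = (LEAST i. occ_at u s i)"

definition last_occ :: "'a list \<Rightarrow> 'a list \<Rightarrow> nat" where
  "last_occ s u = (GREATEST i. occ_at u s i)"

text \<open>u = w1 w2 w3 with w2 = u[first(s) .. last(s)+|s|-1]; border seed: seed of w1 s w3.\<close>
definition border_seed :: "'a list \<Rightarrow> 'a list \<Rightarrow> bool" where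
  "border_seed s u \<longleftrightarrow>
     seed s (take (first_occ s u - 1) u @ s @ drop (last_occ s u + length s - 1) u)"

end

theory Submission
  imports Defs
begin

text \<open>Let \<open>L\<close> be the part of \<open>u\<close> before the first occurrence of \<open>s\<close> and \<open>R\<close> the part after
the last one. Then \<open>s\<close> is a border seed iff it is a seed of \<open>L s R\<close>, the two factors in the
statement are \<open>L s\<close> and \<open>s R\<close>, and \<open>s\<close> occurs in \<open>L s\<close> only as a suffix and in \<open>s R\<close> only
as a prefix. In a word covered by \<open>s\<close> that contains \<open>L s R\<close>, the last letter of \<open>L\<close> lies in an
occurrence of \<open>s\<close> starting before \<open>L\<close>; it overlaps the occurrence of \<open>s\<close> after \<open>L\<close> with a
shift \<open>d \<le> |s|\<close>, which forces the period \<open>d\<close> on \<open>L s\<close>. Conversely, a period \<open>p \<le> |s|\<close> of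
\<open>L s\<close> lets one extend \<open>L s\<close> to the left, step by step, by occurrences of \<open>s\<close> at distance \<open>p\<close>,
which cover it. The right-hand side is the mirror image under reversal, and the two coverings
glue along the middle \<open>s\<close>.\<close>

text \<open>Positions are 0-based from here on.\<close>

definition occurs_at :: "'a list \<Rightarrow> 'a list \<Rightarrow> nat \<Rightarrow> bool" where
  "occurs_at w s q \<longleftrightarrow> q + length s \<le> length w \<and> (\<forall>t<length s. w ! (q + t) = s ! t)"

definition covered :: "'a list \<Rightarrow> 'a list \<Rightarrow> bool" where
  "covered s w \<longleftrightarrow> (\<forall>k<length w. \<exists>q. occurs_at w s q \<and> q \<le> k \<and> k < q + length s)"

definition has_period :: "nat \<Rightarrow> 'a list \<Rightarrow> bool" where
  "has_period p x \<longleftrightarrow> (\<forall>j. j + p < length x \<longrightarrow> x ! j = x ! (j + p))"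

lemma occurs_at_iff_take_drop:
  "occurs_at w s q \<longleftrightarrow> q + length s \<le> length w \<and> take (length s) (drop q w) = s"
  unfolding occurs_at_def by (auto simp: list_eq_iff_nth_eq)

lemma occ_at_iff_occurs_at: "occ_at u s i \<longleftrightarrow> 0 < i \<and> occurs_at u s (i - 1)"
  by (cases i) (auto simp: occ_at_def fac_def occurs_at_iff_take_drop)

lemma covers_iff_covered: "covers s w \<longleftrightarrow> covered s w"
proof
  assume c: "covers s w"
  show "covered s w" unfolding covered_def
  proof (intro allI impI)
    fix k assume "k < length w"
    then obtain i where "occ_at w s i" "i \<le> k + 1" "k + 1 \<le> i + length s - 1"
      using c unfolding covers_def by (auto dest: spec[of _ "k + 1"])
    then show "\<exists>q. occurs_at w s q \<and> q \<le> k \<and> k < q + length s"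
      by (intro exI[of _ "i - 1"]) (auto simp: occ_at_iff_occurs_at)
  qed
next
  assume c: "covered s w"
  show "covers s w" unfolding covers_def
  proof (intro allI impI)
    fix k assume k: "1 \<le> k \<and> k \<le> length w"
    then have "k - 1 < length w" by arith
    then obtain q where "occurs_at w s q" "q \<le> k - 1" "k - 1 < q + length s"
      using c unfolding covered_def by blast
    then show "\<exists>i. occ_at w s i \<and> i \<le> k \<and> k \<le> i + length s - 1"
      using k by (intro exI[of _ "q + 1"]) (auto simp: occ_at_iff_occurs_at)
  qed
qed

lemma has_period_iff_1based:
  "has_period p x \<longleftrightarrow> (\<forall>i. 1 \<le> i \<and> i + p \<le> length x \<longrightarrow> x ! (i - 1) = x ! (i + p - 1))"
proof
  assume h: "has_period p x"
  show "\<forall>i. 1 \<le> i \<and> i + p \<le> length x \<longrightarrow> x ! (i - 1) = x ! (i + p - 1)"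
  proof (intro allI impI)
    fix i assume "1 \<le> i \<and> i + p \<le> length x"
    then show "x ! (i - 1) = x ! (i + p - 1)"
      using h unfolding has_period_def by (cases i) auto
  qed
next
  assume h: "\<forall>i. 1 \<le> i \<and> i + p \<le> length x \<longrightarrow> x ! (i - 1) = x ! (i + p - 1)"
  show "has_period p x" unfolding has_period_def
  proof (intro allI impI)
    fix j assume "j + p < length x"
    then show "x ! j = x ! (j + p)" using h[rule_format, of "j + 1"] by simp
  qed
qed

lemma per_le_iff:
  assumes "0 < m"
  shows "per x \<le> m \<longleftrightarrow> (\<exists>p. 0 < p \<and> p \<le> m \<and> has_period p x)"
proof -
  have per: "per x = (LEAST p. 0 < p \<and> has_period p x)"
    unfolding per_def has_period_iff_1based ..
  have "0 < Suc (length x) \<and> has_period (Suc (length x)) x"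
    by (simp add: has_period_def)
  from LeastI[of "\<lambda>p. 0 < p \<and> has_period p x", OF this]
    Least_le[of "\<lambda>p. 0 < p \<and> has_period p x"]
  show ?thesis unfolding per by (meson le_trans order_refl)
qed

lemma take_drop_rev:
  "q + m \<le> length w \<Longrightarrow> take m (drop q (rev w)) = rev (take m (drop (length w - (q + m)) w))"
  by (simp add: rev_drop rev_take take_drop)

lemma occurs_at_rev:
  "occurs_at (rev w) (rev s) q \<longleftrightarrow>
     q + length s \<le> length w \<and> occurs_at w s (length w - (q + length s))"
  unfolding occurs_at_iff_take_drop by (auto simp: take_drop_rev)

lemma covered_rev: "covered s w \<Longrightarrow> covered (rev s) (rev w)"
  unfolding covered_def
proof (intro allI impI)
  fix k assume cov: "\<forall>k<length w. \<exists>q. occurs_at w s q \<and> q \<le> k \<and> k < q + length s"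
    and k: "k < length (rev w)"
  then have "length w - 1 - k < length w" by simp
  with cov obtain q
    where q: "occurs_at w s q" "q \<le> length w - 1 - k" "length w - 1 - k < q + length s"
    by blast
  moreover have "q + length s \<le> length w"
    using q(1) unfolding occurs_at_def by simp
  moreover from this have "length w - (length w - (q + length s) + length s) = q" by simp
  ultimately have "occurs_at (rev w) (rev s) (length w - (q + length s))"
    unfolding occurs_at_rev by simp
  with q k show "\<exists>q. occurs_at (rev w) (rev s) q \<and> q \<le> k \<and> k < q + length (rev s)"
    by (intro exI[of _ "length w - (q + length s)"]) auto
qed

lemma has_period_rev_imp: "has_period p x \<Longrightarrow> has_period p (rev x)"
  unfolding has_period_def
proof (intro allI impI)
  fix j assume per: "\<forall>j. j + p < length x \<longrightarrow> x ! j = x ! (j + p)"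
    and j: "j + p < length (rev x)"
  then have "x ! (length x - 1 - (j + p)) = x ! (length x - 1 - (j + p) + p)"
    by simp
  also have "length x - 1 - (j + p) + p = length x - 1 - j"
    using j by simp
  finally show "rev x ! j = rev x ! (j + p)"
    using j by (simp add: rev_nth)
qed

lemma has_period_rev: "has_period p (rev x) \<longleftrightarrow> has_period p x"
  using has_period_rev_imp[of p x] has_period_rev_imp[of p "rev x"] by auto

lemma occurs_at_append: "occurs_at (A @ s @ B) s (length A)"
  unfolding occurs_at_def by (auto simp: nth_append)

lemma occurs_at_append_right: "occurs_at A s q \<Longrightarrow> occurs_at (A @ B) s q"
  unfolding occurs_at_def by (auto simp: nth_append)

lemma occurs_at_append_left: "occurs_at B s q \<Longrightarrow> occurs_at (A @ B) s (length A + q)"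
  unfolding occurs_at_def by (auto simp: nth_append)

lemma occurs_at_decomp: "occurs_at w s q \<Longrightarrow> w = take q w @ s @ drop (q + length s) w"
  unfolding occurs_at_iff_take_drop by (metis append_take_drop_id drop_drop add.commute)

lemma occurs_at_overlap:
  "occurs_at w s q \<Longrightarrow> occurs_at w s (q + d) \<Longrightarrow> t < length s \<Longrightarrow> w ! (q + t) = w ! (q + d + t)"
  unfolding occurs_at_def by (simp add: add.assoc)

lemma covered_self: "covered s s"
  unfolding covered_def using occurs_at_append[of "[]" s "[]"] by auto

lemma covered_append:
  assumes "covered s (A @ s)" and "covered s (s @ B)"
  shows "covered s (A @ s @ B)"
  unfolding covered_def
proof (intro allI impI)
  fix k assume k: "k < length (A @ s @ B)"
  show "\<exists>q. occurs_at (A @ s @ B) s q \<and> q \<le> k \<and> k < q + length s"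
  proof (cases "k < length A + length s")
    case True
    then obtain q where "occurs_at (A @ s) s q" "q \<le> k" "k < q + length s"
      using assms(1) unfolding covered_def by auto
    then show ?thesis using occurs_at_append_right[of "A @ s" s q B] by auto
  next
    case False
    with k have "k - length A < length (s @ B)" by auto
    then obtain q where "occurs_at (s @ B) s q" "q \<le> k - length A" "k - length A < q + length s"
      using assms(2) unfolding covered_def by blast
    then show ?thesis using occurs_at_append_left[of "s @ B" s q A] False
      by (intro exI[of _ "length A + q"]) auto
  qed
qed

lemma covered_append_suffix:
  assumes "covered s A" and "A @ D = Z @ s" and "length D \<le> length s"
  shows "covered s (A @ D)"
  unfolding covered_def
proof (intro allI impI)
  fix k assume k: "k < length (A @ D)"
  show "\<exists>q. occurs_at (A @ D) s q \<and> q \<le> k \<and> k < q + length s"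
  proof (cases "k < length A")
    case True
    then obtain q where "occurs_at A s q" "q \<le> k" "k < q + length s"
      using assms(1) unfolding covered_def by auto
    then show ?thesis using occurs_at_append_right[of A s q D] by auto
  next
    case False
    have "length A + length D = length Z + length s"
      using arg_cong[OF assms(2), of length] by simp
    then show ?thesis using occurs_at_append[of Z s "[]"] assms(2,3) False k
      by (intro exI[of _ "length Z"]) auto
  qed
qed

lemma has_period_take: "has_period p x \<Longrightarrow> has_period p (take n x)"
  unfolding has_period_def by auto

lemma occurs_at_periodic_prefix:
  assumes "has_period p (L @ s)" and "length L < p" and "p \<le> length s"
  shows "occurs_at (take (p - length L) s @ L @ s) s 0"
  unfolding occurs_at_def
proof (intro conjI allI impI)
  show "0 + length s \<le> length (take (p - length L) s @ L @ s)" by simp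
  fix t assume t: "t < length s"
  define X where "X = take (p - length L) s"
  have lX: "length X = p - length L" using assms(2,3) unfolding X_def by simp
  show "(X @ L @ s) ! (0 + t) = s ! t"
  proof (cases "t < length X")
    case True
    then show ?thesis unfolding X_def by (simp add: nth_append)
  next
    case False
    then have "(X @ L @ s) ! t = (L @ s) ! (t - length X)" by (simp add: nth_append)
    also have "\<dots> = (L @ s) ! (t - length X + p)"
      using assms(1,2) t lX False unfolding has_period_def by simp
    also have "t - length X + p = length L + t" using assms(2) lX False by simp
    finally show ?thesis by (simp add: nth_append)
  qed
qed

lemma occurs_at_period_shift:
  assumes "has_period p (L @ s)" and "p \<le> length L"
  shows "occurs_at (L @ s) s (length L - p)"
  unfolding occurs_at_def
proof (intro conjI allI impI)
  show "length L - p + length s \<le> length (L @ s)" by simp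
  fix t assume "t < length s"
  then have "(L @ s) ! (length L - p + t) = (L @ s) ! (length L - p + t + p)"
    using assms unfolding has_period_def by simp
  also have "length L - p + t + p = length L + t" using assms(2) by simp
  finally show "(L @ s) ! (length L - p + t) = s ! t" by (simp add: nth_append)
qed

lemma covered_left_extension:
  assumes "has_period p (L @ s)" and "0 < p" and "p \<le> length s"
  shows "\<exists>X. covered s (X @ L @ s)"
  using assms(1)
proof (induction "length L" arbitrary: L rule: less_induct)
  case less
  show ?case
  proof (cases "length L < p")
    case True
    define W where "W = take (p - length L) s @ L @ s"
    have "W = s @ drop (length s) W"
      using occurs_at_decomp[OF occurs_at_periodic_prefix[OF less.prems True assms(3)]]
      unfolding W_def by simp
    moreover have "W = (take (p - length L) s @ L) @ s" unfolding W_def by simp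
    moreover have "length (drop (length s) W) \<le> length s"
      using True assms(3) unfolding W_def by simp
    ultimately have "covered s W"
      using covered_append_suffix[OF covered_self] by metis
    then show ?thesis unfolding W_def by blast
  next
    case False
    define L' where "L' = take (length L - p) L"
    define D where "D = drop (length L - p + length s) (L @ s)"
    have "occurs_at (L @ s) s (length L - p)"
      using occurs_at_period_shift[OF less.prems] False by simp
    then have dec: "L @ s = L' @ s @ D"
      using occurs_at_decomp unfolding L'_def D_def by fastforce
    have "has_period p (L' @ s)"
      using has_period_take[OF less.prems, of "length L' + length s"] dec by simp
    moreover have "length L' < length L" using False assms(2) unfolding L'_def by simp
    ultimately obtain X where "covered s (X @ L' @ s)" using less.hyps by blast
    moreover have "(X @ L' @ s) @ D = (X @ L) @ s" using dec by simp
    moreover have "length D \<le> length s"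
      using False assms(3) unfolding D_def by simp
    ultimately have "covered s ((X @ L' @ s) @ D)"
      using covered_append_suffix by blast
    then show ?thesis using dec by auto
  qed
qed

lemma covered_right_extension:
  assumes "has_period p (s @ R)" and "0 < p" and "p \<le> length s"
  shows "\<exists>Y. covered s (s @ R @ Y)"
proof -
  have "has_period p (rev R @ rev s)"
    using assms(1) has_period_rev[of p "s @ R"] by simp
  then obtain X where "covered (rev s) (X @ rev R @ rev s)"
    using covered_left_extension assms(2,3) by fastforce
  then have "covered s (s @ R @ rev X)"
    using covered_rev[of "rev s" "X @ rev R @ rev s"] by simp
  then show ?thesis by blast
qed

lemma occurs_at_window:
  assumes "occurs_at (X @ y @ Z) s q" and "length X \<le> q" and "q + length s \<le> length X + length y"
  shows "occurs_at y s (q - length X)"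
  unfolding occurs_at_def
proof (intro conjI allI impI)
  show "q - length X + length s \<le> length y" using assms(2,3) by linarith
  fix t assume "t < length s"
  then have "(X @ y @ Z) ! (length X + (q - length X + t)) = s ! t"
    using assms(1,2) unfolding occurs_at_def by simp
  moreover have "q - length X + t < length y"
    using assms(2,3) \<open>t < length s\<close> by linarith
  ultimately show "y ! (q - length X + t) = s ! t"
    by (simp only: nth_append_length_plus nth_append_left)
qed

lemma has_period_of_overlap:
  assumes occ: "occurs_at (X @ L @ s @ Z) s q"
    and "q < length X" and "length X + length L \<le> q + length s"
  shows "has_period (length X + length L - q) (L @ s)"
  unfolding has_period_def
proof (intro allI impI)
  define w where "w = X @ L @ s @ Z"
  define d where "d = length X + length L - q"
  have w_LS: "w ! (length X + i) = (L @ s) ! i" if "i < length L + length s" for i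
    using that unfolding w_def by (auto simp: nth_append)
  have occ_LS: "occurs_at w s (q + d)"
    using occurs_at_append[of "X @ L" s Z] assms(2) unfolding w_def d_def by simp
  fix j assume j: "j + d < length (L @ s)"
  define t where "t = length X + j - q"
  have "t < length s" using j assms(2,3) unfolding t_def d_def by simp
  have "(L @ s) ! j = w ! (q + t)"
    using w_LS[of j] j assms(2) unfolding t_def by simp
  also have "\<dots> = w ! (q + d + t)"
    using occurs_at_overlap[of w s q d t] occ occ_LS \<open>t < length s\<close> unfolding w_def by simp
  also have "q + d + t = length X + (j + d)"
    using assms(2) unfolding t_def d_def by simp
  also have "w ! \<dots> = (L @ s) ! (j + d)"
    using w_LS[of "j + d"] j by simp
  finally show "(L @ s) ! j = (L @ s) ! (j + d)" .
qed

lemma covered_imp_period_left: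
  assumes "s \<noteq> []" and cov: "covered s (X @ L @ s @ Z)"
    and first: "\<forall>j<length L. \<not> occurs_at (L @ s) s j"
  shows "\<exists>p. 0 < p \<and> p \<le> length s \<and> has_period p (L @ s)"
proof (cases "L = []")
  case True
  with assms(1) show ?thesis by (intro exI[of _ "length s"]) (auto simp: has_period_def)
next
  case False
  then have L_pos: "0 < length L" by simp
  moreover have "length (X @ L @ s @ Z) = length X + length L + length s + length Z" by simp
  ultimately have "length X + length L - 1 < length (X @ L @ s @ Z)" by linarith
  then obtain q where occ: "occurs_at (X @ L @ s @ Z) s q"
    and q_le: "q \<le> length X + length L - 1" and q_gt: "length X + length L - 1 < q + length s"
    using cov unfolding covered_def by blast
  show ?thesis
  proof (cases "length X \<le> q")
    case True
    have "q + length s \<le> length X + length (L @ s)" using q_le L_pos by simp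
    then have "occurs_at (L @ s) s (q - length X)"
      using occurs_at_window[of X "L @ s" Z s q] occ True by simp
    moreover have "q - length X < length L" using q_le L_pos by linarith
    ultimately show ?thesis using first by blast
  next
    case False
    then have "q < length X" and "length X + length L \<le> q + length s"
      using q_gt L_pos by linarith+
    moreover have "0 < length X + length L - q" "length X + length L - q \<le> length s"
      using False q_gt L_pos by linarith+
    ultimately show ?thesis using has_period_of_overlap[OF occ] by blast
  qed
qed

lemma covered_imp_period_right:
  assumes "s \<noteq> []" and cov: "covered s (X @ s @ R @ Z)"
    and last: "\<forall>j>0. \<not> occurs_at (s @ R) s j"
  shows "\<exists>p. 0 < p \<and> p \<le> length s \<and> has_period p (s @ R)"
proof -
  have "covered (rev s) (rev Z @ rev R @ rev s @ rev X)"
    using covered_rev[OF cov] by simp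
  moreover have "\<not> occurs_at (rev R @ rev s) (rev s) j" if "j < length R" for j
  proof
    assume "occurs_at (rev R @ rev s) (rev s) j"
    moreover have "length (s @ R) - (j + length s) = length R - j" by simp
    ultimately have "occurs_at (s @ R) s (length R - j)"
      using occurs_at_rev[of "s @ R" s j] by simp
    with last that show False by simp
  qed
  ultimately obtain p where "0 < p" "p \<le> length s" "has_period p (rev R @ rev s)"
    using covered_imp_period_left[of "rev s" "rev Z" "rev R" "rev X"] assms(1) by auto
  then show ?thesis using has_period_rev[of p "s @ R"] by auto
qed

lemma seed_iff_periods:
  assumes "s \<noteq> []"
    and first: "\<forall>j<length L. \<not> occurs_at (L @ s) s j"
    and last: "\<forall>j>0. \<not> occurs_at (s @ R) s j"
  shows "seed s (L @ s @ R) \<longleftrightarrow>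
    (\<exists>p. 0 < p \<and> p \<le> length s \<and> has_period p (L @ s)) \<and>
    (\<exists>p. 0 < p \<and> p \<le> length s \<and> has_period p (s @ R))"
proof
  assume "seed s (L @ s @ R)"
  then obtain X Y where cov: "covered s (X @ (L @ s @ R) @ Y)"
    unfolding seed_def sublist_def covers_iff_covered by blast
  show "(\<exists>p. 0 < p \<and> p \<le> length s \<and> has_period p (L @ s)) \<and>
    (\<exists>p. 0 < p \<and> p \<le> length s \<and> has_period p (s @ R))"
    using covered_imp_period_left[OF assms(1) _ first, of X "R @ Y"]
      covered_imp_period_right[OF assms(1) _ last, of "X @ L" Y] cov by simp
next
  assume "(\<exists>p. 0 < p \<and> p \<le> length s \<and> has_period p (L @ s)) \<and>
    (\<exists>p. 0 < p \<and> p \<le> length s \<and> has_period p (s @ R))"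
  then obtain X Y where "covered s (X @ L @ s)" and "covered s (s @ R @ Y)"
    using covered_left_extension covered_right_extension by metis
  then have "covered s ((X @ L) @ s @ (R @ Y))"
    using covered_append[of s "X @ L" "R @ Y"] by simp
  then have "covers s (X @ (L @ s @ R) @ Y)"
    unfolding covers_iff_covered by simp
  then show "seed s (L @ s @ R)"
    unfolding seed_def sublist_def by blast
qed

lemma occurs_at_take: "occurs_at (take n w) s j \<Longrightarrow> occurs_at w s j"
  unfolding occurs_at_def by auto

lemma occurs_at_drop: "b \<le> length w \<Longrightarrow> occurs_at (drop b w) s j \<Longrightarrow> occurs_at w s (b + j)"
  unfolding occurs_at_def by (auto simp: add.assoc)

lemma first_occ_minimal:
  assumes "sublist s u"
  obtains a where "first_occ s u = Suc a" and "occurs_at u s a"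
    and "\<And>j. occurs_at u s j \<Longrightarrow> a \<le> j"
proof -
  obtain ps ss where "u = ps @ s @ ss" using assms unfolding sublist_def by blast
  then have "occ_at u s (Suc (length ps))"
    unfolding occ_at_iff_occurs_at using occurs_at_append by simp
  then have occ: "occ_at u s (first_occ s u)" and min: "\<And>i. occ_at u s i \<Longrightarrow> first_occ s u \<le> i"
    unfolding first_occ_def by (auto intro: LeastI Least_le)
  show ?thesis
  proof (rule that)
    show "first_occ s u = Suc (first_occ s u - 1)" and "occurs_at u s (first_occ s u - 1)"
      using occ unfolding occ_at_iff_occurs_at by simp_all
    show "first_occ s u - 1 \<le> j" if "occurs_at u s j" for j
      using min[of "Suc j"] that unfolding occ_at_iff_occurs_at by simp
  qed
qed

lemma last_occ_maximal:
  assumes "sublist s u"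
  obtains b where "last_occ s u = Suc b" and "occurs_at u s b"
    and "\<And>j. occurs_at u s j \<Longrightarrow> j \<le> b"
proof -
  obtain ps ss where "u = ps @ s @ ss" using assms unfolding sublist_def by blast
  then have occ: "occ_at u s (Suc (length ps))"
    unfolding occ_at_iff_occurs_at using occurs_at_append by simp
  have bound: "i \<le> Suc (length u)" if "occ_at u s i" for i
    using that unfolding occ_at_def by arith
  have occ_last: "occ_at u s (last_occ s u)" and max: "\<And>i. occ_at u s i \<Longrightarrow> i \<le> last_occ s u"
    unfolding last_occ_def using GreatestI_nat[of "occ_at u s", OF occ bound] Greatest_le_nat[of "occ_at u s", OF _ bound]
    by auto
  show ?thesis
  proof (rule that)
    show "last_occ s u = Suc (last_occ s u - 1)" and "occurs_at u s (last_occ s u - 1)"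
      using occ_last unfolding occ_at_iff_occurs_at by simp_all
    show "j \<le> last_occ s u - 1" if "occurs_at u s j" for j
      using max[of "Suc j"] that unfolding occ_at_iff_occurs_at by simp
  qed
qed

lemma border_seed_factors:
  assumes "sublist s u"
  obtains L R where "fac u 1 (first_occ s u + length s - 1) = L @ s"
    and "fac u (last_occ s u) (length u) = s @ R"
    and "border_seed s u \<longleftrightarrow> seed s (L @ s @ R)"
    and "\<forall>j<length L. \<not> occurs_at (L @ s) s j"
    and "\<forall>j>0. \<not> occurs_at (s @ R) s j"
proof -
  obtain a where first: "first_occ s u = Suc a" and occ_a: "occurs_at u s a"
    and min: "\<And>j. occurs_at u s j \<Longrightarrow> a \<le> j"
    using first_occ_minimal[OF assms] by blast
  obtain b where last: "last_occ s u = Suc b" and occ_b: "occurs_at u s b"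
    and max: "\<And>j. occurs_at u s j \<Longrightarrow> j \<le> b"
    using last_occ_maximal[OF assms] by blast
  have prefix: "take (a + length s) u = take a u @ s"
    using occ_a unfolding occurs_at_iff_take_drop by (simp add: take_add)
  have suffix: "drop b u = s @ drop (b + length s) u"
    using occ_b unfolding occurs_at_iff_take_drop by (metis append_take_drop_id drop_drop add.commute)
  show ?thesis
  proof (rule that)
    show "fac u 1 (first_occ s u + length s - 1) = take a u @ s"
      using prefix first by (simp add: fac_def)
    show "fac u (last_occ s u) (length u) = s @ drop (b + length s) u"
      using suffix last occ_b unfolding occurs_at_def by (auto simp: fac_def)
    show "border_seed s u \<longleftrightarrow> seed s (take a u @ s @ drop (b + length s) u)"
      unfolding border_seed_def first last by simp
    show "\<forall>j<length (take a u). \<not> occurs_at (take a u @ s) s j"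
    proof (intro allI impI notI)
      fix j assume "j < length (take a u)" and "occurs_at (take a u @ s) s j"
      then show False
        using min[OF occurs_at_take[of "a + length s" u s j]] prefix by simp
    qed
    show "\<forall>j>0. \<not> occurs_at (s @ drop (b + length s) u) s j"
    proof (intro allI impI notI)
      fix j assume "0 < j" and "occurs_at (s @ drop (b + length s) u) s j"
      moreover have "b \<le> length u" using occ_b unfolding occurs_at_def by simp
      ultimately show False
        using max[OF occurs_at_drop[of b u s j]] suffix by simp
    qed
  qed
qed

theorem fact1:
  fixes u s :: "'a list"
  assumes "s \<noteq> []" and "sublist s u"
  shows "border_seed s u \<longleftrightarrow>
    max (per (fac u 1 (first_occ s u + length s - 1))) (per (fac u (last_occ s u) (length u)))
      \<le> length s"
proof -
  obtain L R where prefix: "fac u 1 (first_occ s u + length s - 1) = L @ s"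
    and suffix: "fac u (last_occ s u) (length u) = s @ R"
    and border: "border_seed s u \<longleftrightarrow> seed s (L @ s @ R)"
    and first: "\<forall>j<length L. \<not> occurs_at (L @ s) s j"
    and last: "\<forall>j>0. \<not> occurs_at (s @ R) s j"
    by (rule border_seed_factors[OF assms(2)])
  have "0 < length s" using assms(1) by simp
  then show ?thesis
    unfolding prefix suffix border max.bounded_iff per_le_iff[OF \<open>0 < length s\<close>]
    using seed_iff_periods[OF assms(1) first last] by simp
qed

end
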